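(* Under the hypotheses of the Weights Lemma (so in particular $P\neq\emptyset$), one has $\widehat J(i)\in P$ for all $(J,i)\in\overline{\mathbb J}$, and $$P=\operatorname{conv}\{\widehat J(i):\ (J,i)\in\overline{\mathbb J}\}+\operatorname{cone}\{e_1,\ldots,e_n\},$$ where $\operatorname{conv}$ denotes convex hull and $\operatorname{cone}\{e_1,\ldots,e_n\}=\{\sum_i c_ie_i: c_i\ge0\}$.
   Context: Setting: $s,d_1,\ldots,d_n\ge0$ reals and $V_1,\ldots,V_n$ subspaces of a finite-dimensional real vector space with $\sum_{i\in I}d_i+\dim(\sum_{i\in I^c}V_i)\ge s$ for every $I\subset\{1,\ldots,n\}$ ($I^c$ the complement, empty sums $0$ / $\{0\}$); each $V_i$ has a fixed generating set $\{v^i_1,\ldots,v^i_{m_i}\}$. $P=\{(d_1,\ldots,d_n)\in\mathbb R^n: d_i\ge0\ \forall i,\ \sum_{i\in I}d_i+\dim(\sum_{i\in I^c}V_i)\ge s\ \forall I\subset\{1,\ldots,n\}\}$. $\mathbb J$ is the family of tuples $J=(\mathrm j_1,\ldots,\mathrm j_n)$, $\mathrm j_i\subset\{v^i_1,\ldots,v^i_{m_i}\}$, such that all elements of $\mathrm j_1,\ldots,\mathrm j_n$ taken together form a linearly independent family and $\#\mathrm j_1+\cdots+\#\mathrm j_n\ge s$; $\widehat J(i)=(\#\mathrm j_1,\ldots,\#\mathrm j_n)+(s-\sum_l\#\mathrm j_l)e_i$ with $e_i$ the canonical basis of $\mathbb R^n$; $\overline{\mathbb J}=\{(J,i)\in\mathbb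 J\times\{1,\ldots,n\}: \widehat J(i)\ge0\text{ coordinatewise}\}$. *)

theory Defs
  imports "HOL-Analysis.Analysis"
begin

text \<open>Indices i range over a finite type 'n (so n = CARD('n)); R^n is real^'n.
  The generators of V_i are v i 0, ..., v i (m i - 1).\<close>

definition Pset :: "real \<Rightarrow> ('n::finite \<Rightarrow> 'a::euclidean_space set) \<Rightarrow> (real^'n) set" where
  "Pset s V = {d. (\<forall>i. 0 \<le> d $ i) \<and>
      (\<forall>I. s \<le> (\<Sum>i\<in>I. d $ i) + real (dim (span (\<Union>i\<in>-I. V i))))}"

text \<open>A tuple J = (j_1,...,j_n) is given by index sets j i \<subseteq> {..<m i};
  the family of all chosen vectors (indexed by pairs (i,k)) must be linearly independent,
  i.e. injective on the index set with independent image.\<close>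
definition JJ :: "real \<Rightarrow> ('n::finite \<Rightarrow> nat) \<Rightarrow> ('n \<Rightarrow> nat \<Rightarrow> 'a::euclidean_space)
    \<Rightarrow> ('n \<Rightarrow> nat set) set" where
  "JJ s m v = {j. (\<forall>i. j i \<subseteq> {..<m i}) \<and>
      inj_on (\<lambda>(i,k). v i k) (Sigma UNIV j) \<and>
      independent ((\<lambda>(i,k). v i k) ` Sigma UNIV j) \<and>
      s \<le> (\<Sum>i\<in>UNIV. real (card (j i)))}"

definition Jhat :: "real \<Rightarrow> ('n::finite \<Rightarrow> nat set) \<Rightarrow> 'n \<Rightarrow> real^'n" where
  "Jhat s j i = (\<chi> l. real (card (j l))) + (s - (\<Sum>l\<in>UNIV. real (card (j l)))) *\<^sub>R axis i 1"

definition JJbar :: "real \<Rightarrow> ('n::finite \<Rightarrow> nat) \<Rightarrow> ('n \<Rightarrow> nat \<Rightarrow> 'a::euclidean_space)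
    \<Rightarrow> (('n \<Rightarrow> nat set) \<times> 'n) set" where
  "JJbar s m v = {(j, i). j \<in> JJ s m v \<and> (\<forall>l. 0 \<le> Jhat s j i $ l)}"

definition coord_cone :: "(real^'n::finite) set" where
  "coord_cone = {(\<Sum>i\<in>UNIV. c i *\<^sub>R axis i 1) | c. \<forall>i. 0 \<le> c i}"

end

theory Submission
  imports Defs
begin

(*
  Inclusion "\<supseteq>": every Jhat(J,i) lies in P, since its coordinates count linearly independent
  generators, which never exceed the dimension bounds defining P; moreover P is convex and an
  up-set (stable under adding vectors of the orthant).

  Inclusion "\<subseteq>": conv{Jhat} + orthant is closed and convex, so a point of P outside it would
  be strictly separated by a hyperplane, whose normal a is nonnegative since the set is an up-set.
  It therefore suffices that every functional a \<ge> 0 attains its minimum over P at some Jhat.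
  This is a greedy argument: order the indices by increasing weight, let T_0 \<subseteq> T_1 \<subseteq> ...
  be the prefixes, take the first p with dim(\<Sum>_{l \<in> T_p} V_l) \<ge> s, choose independent
  generators adapted to the flag \<Sum>_{T_0} \<subseteq> \<Sum>_{T_1} \<subseteq> ... and put the surplus on the index
  entering at step p.  The resulting Jhat minimises every suffix sum over P, and Abel summation
  against the sorted weights turns these suffix inequalities into a\<bullet>Jhat \<le> a\<bullet>d.
*)

lemma axis_component: "axis k (x::real) $ l = (if l = k then x else 0)"
  by (simp add: axis_def)

lemma coord_cone_eq_orthant: "coord_cone = {y::real^'n::finite. \<forall>i. 0 \<le> y $ i}"
proof
  show "coord_cone \<subseteq> {y::real^'n. \<forall>i. 0 \<le> y $ i}"
    by (auto simp: coord_cone_def axis_component if_distrib sum.delta cong: if_cong)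
  show "{y::real^'n. \<forall>i. 0 \<le> y $ i} \<subseteq> coord_cone"
  proof
    fix y :: "real^'n" assume "y \<in> {y. \<forall>i. 0 \<le> y $ i}"
    moreover have "y = (\<Sum>i\<in>UNIV. (y $ i) *\<^sub>R axis i 1)"
      by (simp add: vec_eq_iff axis_component if_distrib sum.delta cong: if_cong)
    ultimately show "y \<in> coord_cone" unfolding coord_cone_def by blast
  qed
qed

lemma Pset_convex:
  fixes V :: "'n::finite \<Rightarrow> 'a::euclidean_space set"
  shows "convex (Pset s V)"
proof (rule convexI)
  fix x y :: "real^'n" and u w :: real
  assume "x \<in> Pset s V" "y \<in> Pset s V" and uw: "0 \<le> u" "0 \<le> w" "u + w = 1"
  then have x: "\<forall>i. 0 \<le> x $ i" "\<forall>I. s \<le> (\<Sum>i\<in>I. x $ i) + real (dim (span (\<Union>i\<in>-I. V i)))"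
    and y: "\<forall>i. 0 \<le> y $ i" "\<forall>I. s \<le> (\<Sum>i\<in>I. y $ i) + real (dim (span (\<Union>i\<in>-I. V i)))"
    by (auto simp: Pset_def)
  have "s \<le> (\<Sum>i\<in>I. (u *\<^sub>R x + w *\<^sub>R y) $ i) + real (dim (span (\<Union>i\<in>-I. V i)))" for I
  proof -
    let ?D = "real (dim (span (\<Union>i\<in>-I. V i)))"
    have "u * s \<le> u * ((\<Sum>i\<in>I. x $ i) + ?D)" "w * s \<le> w * ((\<Sum>i\<in>I. y $ i) + ?D)"
      using x y uw by (simp_all add: mult_left_mono)
    then have "(u + w) * s \<le> u * (\<Sum>i\<in>I. x $ i) + w * (\<Sum>i\<in>I. y $ i) + (u + w) * ?D"
      by (simp add: algebra_simps)
    then show ?thesis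
      using uw by (simp add: sum.distrib sum_distrib_left)
  qed
  moreover have "0 \<le> (u *\<^sub>R x + w *\<^sub>R y) $ i" for i
    using x y uw by simp
  ultimately show "u *\<^sub>R x + w *\<^sub>R y \<in> Pset s V"
    by (simp add: Pset_def)
qed

lemma Pset_plus_coord_cone:
  assumes "x \<in> Pset s V" and "y \<in> coord_cone"
  shows "x + y \<in> Pset s V"
proof -
  have y: "\<forall>i. 0 \<le> y $ i"
    using assms(2) by (simp add: coord_cone_eq_orthant)
  have x: "\<forall>i. 0 \<le> x $ i" "\<forall>I. s \<le> (\<Sum>i\<in>I. x $ i) + real (dim (span (\<Union>i\<in>-I. V i)))"
    using assms(1) by (auto simp: Pset_def)
  have "s \<le> (\<Sum>i\<in>I. (x + y) $ i) + real (dim (span (\<Union>i\<in>-I. V i)))" for I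
  proof -
    have "s \<le> (\<Sum>i\<in>I. x $ i) + real (dim (span (\<Union>i\<in>-I. V i)))"
      using x(2) by blast
    also have "(\<Sum>i\<in>I. x $ i) \<le> (\<Sum>i\<in>I. (x + y) $ i)"
      using y by (simp add: sum.distrib sum_nonneg)
    finally show ?thesis
      by simp
  qed
  then show ?thesis
    using x(1) y by (simp add: Pset_def add_nonneg_nonneg)
qed

lemma span_Union_V:
  assumes "\<forall>i. V i = span (v i ` {..<m i})"
  shows "span (\<Union>i\<in>T. V i) = span ((\<lambda>(i,k). v i k) ` Sigma T (\<lambda>i. {..<m i}))"
proof
  have "V i \<subseteq> span ((\<lambda>(i,k). v i k) ` Sigma T (\<lambda>i. {..<m i}))" if "i \<in> T" for i
    using that assms by (auto intro!: span_mono)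
  then show "span (\<Union>i\<in>T. V i) \<subseteq> span ((\<lambda>(i,k). v i k) ` Sigma T (\<lambda>i. {..<m i}))"
    by (simp add: UN_least span_minimal)
  have "(\<lambda>(i,k). v i k) ` Sigma T (\<lambda>i. {..<m i}) \<subseteq> (\<Union>i\<in>T. V i)"
    using assms by (auto intro: span_base)
  then show "span ((\<lambda>(i,k). v i k) ` Sigma T (\<lambda>i. {..<m i})) \<subseteq> span (\<Union>i\<in>T. V i)"
    by (rule span_mono)
qed

section \<open>The points Jhat\<close>

lemma Jhat_component:
  "Jhat s j i $ l = real (card (j l)) + (if l = i then s - (\<Sum>l\<in>UNIV. real (card (j l))) else 0)"
  by (simp add: Jhat_def axis_component)

lemma sum_UNIV_split_Compl:
  fixes g :: "'n::finite \<Rightarrow> real"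
  shows "(\<Sum>l\<in>UNIV. g l) = (\<Sum>l\<in>U. g l) + (\<Sum>l\<in>-U. g l)"
  using sum.Int_Diff[of UNIV g U] by (simp add: Compl_eq_Diff_UNIV)

lemma Jhat_sum:
  "(\<Sum>l\<in>U. Jhat s j i $ l) =
     (if i \<in> U then s - (\<Sum>l\<in>-U. real (card (j l))) else (\<Sum>l\<in>U. real (card (j l))))"
proof -
  let ?c = "\<lambda>l. real (card (j l))"
  have "(\<Sum>l\<in>U. Jhat s j i $ l) = (\<Sum>l\<in>U. ?c l) + (\<Sum>l\<in>U. if l = i then s - sum ?c UNIV else 0)"
    unfolding Jhat_component by (rule sum.distrib)
  also have "\<dots> = (\<Sum>l\<in>U. ?c l) + (if i \<in> U then s - sum ?c UNIV else 0)"
    by (simp add: sum.delta)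
  finally show ?thesis
    using sum_UNIV_split_Compl[of ?c U] by simp
qed

text \<open>For J in JJ, the generators chosen from the V_l with l \<in> T are independent vectors of the
  subspace sum over T, so their number is bounded by its dimension.\<close>
lemma JJ_card_le_dim:
  assumes hV: "\<forall>i. V i = span (v i ` {..<m i})" and j: "j \<in> JJ s m v"
  shows "(\<Sum>l\<in>T. real (card (j l))) \<le> real (dim (span (\<Union>l\<in>T. V l)))"
proof -
  let ?vv = "\<lambda>(i,k). v i k"
  have jsub: "\<forall>i. j i \<subseteq> {..<m i}" and inj: "inj_on ?vv (Sigma UNIV j)"
    and ind: "independent (?vv ` Sigma UNIV j)"
    using j by (auto simp: JJ_def)
  have "finite (j l)" for l
    using jsub finite_subset by blast
  then have "(\<Sum>l\<in>T. card (j l)) = card (Sigma T j)"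
    by (simp add: card_SigmaI)
  also have "\<dots> = card (?vv ` Sigma T j)"
    using inj by (auto intro!: card_image[symmetric] inj_on_subset[OF inj])
  also have "\<dots> \<le> dim (span (\<Union>l\<in>T. V l))"
  proof (rule independent_card_le_dim)
    show "independent (?vv ` Sigma T j)"
      by (rule independent_mono[OF ind]) auto
    show "?vv ` Sigma T j \<subseteq> span (\<Union>l\<in>T. V l)"
      using jsub hV by (force intro: span_base)
  qed
  finally show ?thesis
    by (metis of_nat_le_iff of_nat_sum)
qed

text \<open>Every Jhat(J,i) with (J,i) in JJbar lies in P: its coordinate sum over I is either
  s or |J| \<ge> s, diminished by the number of generators chosen outside I, and that number is at
  most the dimension of the subspace sum over the complement of I.\<close>
lemma Jhat_in_Pset:
  assumes hV: "\<forall>i. V i = span (v i ` {..<m i})" and ji: "(j, i) \<in> JJbar s m v"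
  shows "Jhat s j i \<in> Pset s V"
proof -
  let ?c = "\<lambda>l. real (card (j l))"
  have j: "j \<in> JJ s m v" and tot: "s \<le> sum ?c UNIV" and nonneg: "\<forall>l. 0 \<le> Jhat s j i $ l"
    using ji by (auto simp: JJbar_def JJ_def)
  have "s \<le> (\<Sum>l\<in>I. Jhat s j i $ l) + real (dim (span (\<Union>l\<in>-I. V l)))" for I
    using JJ_card_le_dim[OF hV j, of "-I"] tot sum_UNIV_split_Compl[of ?c I]
    by (simp add: Jhat_sum)
  then show ?thesis
    using nonneg by (simp add: Pset_def)
qed

lemma finite_JJbar:
  fixes m :: "'n::finite \<Rightarrow> nat"
  shows "finite (JJbar s m v)"
proof -
  have "{j. \<forall>i. j i \<subseteq> {..<m i}} = (\<Pi>\<^sub>E i\<in>UNIV. Pow {..<m i})"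
    by (auto simp: PiE_def Pi_def extensional_def)
  then have "finite {j. \<forall>i. j i \<subseteq> {..<m i}}"
    by (simp add: finite_PiE)
  then have "finite ({j. \<forall>i. j i \<subseteq> {..<m i}} \<times> (UNIV::'n set))"
    by (rule finite_cartesian_product) simp
  moreover have "JJbar s m v \<subseteq> {j. \<forall>i. j i \<subseteq> {..<m i}} \<times> (UNIV::'n set)"
    by (auto simp: JJbar_def JJ_def)
  ultimately show ?thesis
    by (rule finite_subset[rotated])
qed

section \<open>Independent families adapted to a flag\<close>

lemma extend_independent_family:
  fixes g :: "'b \<Rightarrow> 'a::euclidean_space"
  assumes "finite Y" "X \<subseteq> Y" "inj_on g X" "independent (g ` X)"
  shows "\<exists>Z. X \<subseteq> Z \<and> Z \<subseteq> Y \<and> inj_on g Z \<and> independent (g ` Z) \<and> dim (span (g ` Y)) \<le> card Z"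
proof -
  obtain C where C: "g ` X \<subseteq> C" "C \<subseteq> g ` Y" "independent C" "g ` Y \<subseteq> span C"
    using maximal_independent_subset_extend[of "g ` X" "g ` Y"] assms by blast
  let ?h = "inv_into Y g"
  define Z where "Z = X \<union> ?h ` (C - g ` X)"
  have gh: "g (?h c) = c" if "c \<in> C" for c
    using C(2) that by (auto intro: f_inv_into_f)
  have gZ: "g ` Z = C"
    unfolding Z_def using C(1) gh by (auto simp: image_Un image_image)
  have "inj_on g (?h ` (C - g ` X))"
    by (rule inj_onI) (auto simp: gh)
  then have injZ: "inj_on g Z"
    unfolding Z_def inj_on_Un using assms(3) by (auto simp: gh)
  have "finite C"
    using C(2) assms(1) finite_subset by blast
  then have "dim (span (g ` Y)) \<le> card C"
    using C(4) by (simp add: dim_span dim_le_card)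
  also have "card C = card Z"
    using card_image[OF injZ] gZ by simp
  finally have "dim (span (g ` Y)) \<le> card Z" .
  moreover have "X \<subseteq> Z" "Z \<subseteq> Y"
    using assms(2) C(2) unfolding Z_def by (auto intro: inv_into_into)
  ultimately show ?thesis
    using injZ gZ C(3) by blast
qed

lemma independent_family_card_le_dim:
  fixes g :: "'b \<Rightarrow> 'a::euclidean_space"
  assumes "inj_on g B" "independent (g ` B)" "A \<subseteq> B" "A \<subseteq> Y"
  shows "card A \<le> dim (span (g ` Y))"
proof -
  have "card A = card (g ` A)"
    using assms(1,3) by (simp add: card_image inj_on_subset)
  also have "\<dots> \<le> dim (span (g ` Y))"
  proof (rule independent_card_le_dim)
    show "g ` A \<subseteq> span (g ` Y)"
      using assms(4) by (auto intro: span_base)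
    show "independent (g ` A)"
      using assms(2) image_mono[OF assms(3)] by (rule independent_mono)
  qed
  finally show ?thesis .
qed

text \<open>For a chain Y_0 \<subseteq> Y_1 \<subseteq> ... there is a single independent family B \<subseteq> Y_q whose trace on
  every Y_k, k \<le> q, has the maximal size dim (span (g`Y_k)); i.e. a basis adapted to a flag.\<close>
lemma flag_independent_family:
  fixes g :: "'b \<Rightarrow> 'a::euclidean_space"
  assumes fin: "\<And>k. finite (Y k)" and mono: "\<And>k. Y k \<subseteq> Y (Suc k)"
  shows "\<exists>B. B \<subseteq> Y q \<and> inj_on g B \<and> independent (g ` B) \<and>
             (\<forall>k\<le>q. card (B \<inter> Y k) = dim (span (g ` Y k)))"
proof (induction q)
  case 0
  obtain Z where Z: "{} \<subseteq> Z" "Z \<subseteq> Y 0" "inj_on g Z" "independent (g ` Z)"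
      "dim (span (g ` Y 0)) \<le> card Z"
    using extend_independent_family[of "Y 0" "{}" g] fin independent_empty by auto
  moreover have "card Z \<le> dim (span (g ` Y 0))"
    using independent_family_card_le_dim[OF Z(3,4), of Z "Y 0"] Z(2) by simp
  ultimately show ?case
    by (intro exI[of _ Z]) (auto simp: Int_absorb2)
next
  case (Suc q)
  then obtain B where B: "B \<subseteq> Y q" "inj_on g B" "independent (g ` B)"
    "\<forall>k\<le>q. card (B \<inter> Y k) = dim (span (g ` Y k))"
    by blast
  obtain Z where Z: "B \<subseteq> Z" "Z \<subseteq> Y (Suc q)" "inj_on g Z" "independent (g ` Z)"
    "dim (span (g ` Y (Suc q))) \<le> card Z"
    using extend_independent_family[of "Y (Suc q)" B g] fin mono B by blast
  have "card (Z \<inter> Y k) = dim (span (g ` Y k))" if "k \<le> Suc q" for k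
  proof (rule antisym)
    show "card (Z \<inter> Y k) \<le> dim (span (g ` Y k))"
      using Z(3,4) by (rule independent_family_card_le_dim) auto
    show "dim (span (g ` Y k)) \<le> card (Z \<inter> Y k)"
    proof (cases "k = Suc q")
      case True
      then show ?thesis
        using Z(2,5) by (simp add: Int_absorb2)
    next
      case False
      then have "dim (span (g ` Y k)) = card (B \<inter> Y k)"
        using B(4) that by simp
      also have "\<dots> \<le> card (Z \<inter> Y k)"
        using Z(1) fin by (intro card_mono) auto
      finally show ?thesis .
    qed
  qed
  then show ?case
    using Z by blast
qed

lemma nat_seq_crossing:
  fixes f :: "nat \<Rightarrow> real"
  assumes "f 0 \<le> s" "s \<le> f N" "0 < N"
  shows "\<exists>p. 0 < p \<and> p \<le> N \<and> f (p - 1) \<le> s \<and> s \<le> f p"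
  using assms
proof (induction N)
  case 0
  then show ?case by simp
next
  case (Suc N)
  show ?case
  proof (cases "0 < N \<and> s \<le> f N")
    case True
    then show ?thesis
      using Suc.IH Suc.prems(1) le_SucI by blast
  next
    case False
    then have "f N \<le> s"
      using Suc.prems(1) by (cases "N = 0") auto
    then show ?thesis
      using Suc.prems(2) by (intro exI[of _ "Suc N"]) simp
  qed
qed

section \<open>The greedy vertex\<close>

lemma flag_tuple:
  fixes m :: "'i \<Rightarrow> nat" and v :: "'i \<Rightarrow> nat \<Rightarrow> 'a::euclidean_space"
  assumes hV: "\<forall>i. V i = span (v i ` {..<m i})"
  shows "\<exists>j. (\<forall>l. j l \<subseteq> {..<m l}) \<and> inj_on (\<lambda>(i,k). v i k) (Sigma UNIV j) \<and>
             independent ((\<lambda>(i,k). v i k) ` Sigma UNIV j) \<and>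
             (\<forall>l. l \<notin> set (take p \<sigma>) \<longrightarrow> j l = {}) \<and>
             (\<forall>k\<le>p. (\<Sum>l\<in>set (take k \<sigma>). real (card (j l))) =
                      real (dim (span (\<Union>l\<in>set (take k \<sigma>). V l))))"
proof -
  let ?vv = "\<lambda>(i,k). v i k"
  define Y where "Y k = Sigma (set (take k \<sigma>)) (\<lambda>l. {..<m l})" for k
  have finite_Y: "finite (Y k)" for k
    unfolding Y_def by (rule finite_SigmaI) simp_all
  have mono_Y: "Y k \<subseteq> Y (Suc k)" for k
    unfolding Y_def using set_take_subset_set_take[of k "Suc k" \<sigma>] by auto
  obtain B where B: "B \<subseteq> Y p" "inj_on ?vv B" "independent (?vv ` B)"
    "\<forall>k\<le>p. card (B \<inter> Y k) = dim (span (?vv ` Y k))"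
    using flag_independent_family[of Y p ?vv, OF finite_Y mono_Y] by blast
  define j where "j l = {k. (l, k) \<in> B}" for l
  have jsub: "\<forall>l. j l \<subseteq> {..<m l}"
    using B(1) unfolding j_def Y_def by auto
  have "finite (j l)" for l
    using jsub finite_subset by blast
  then have trace: "real (card (B \<inter> Y k)) = (\<Sum>l\<in>set (take k \<sigma>). real (card (j l)))" for k
  proof -
    have "B \<inter> Y k = Sigma (set (take k \<sigma>)) j"
      using B(1) unfolding j_def Y_def by auto
    then show ?thesis
      using \<open>\<And>l. finite (j l)\<close> by (simp add: card_SigmaI)
  qed
  have "Sigma UNIV j = B"
    using B(1) unfolding j_def Y_def by auto
  moreover have "\<forall>l. l \<notin> set (take p \<sigma>) \<longrightarrow> j l = {}"
    using B(1) unfolding j_def Y_def by auto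
  moreover have "\<forall>k\<le>p. (\<Sum>l\<in>set (take k \<sigma>). real (card (j l))) =
                    real (dim (span (\<Union>l\<in>set (take k \<sigma>). V l)))"
  proof (intro allI impI)
    fix k assume "k \<le> p"
    have "(\<Sum>l\<in>set (take k \<sigma>). real (card (j l))) = real (card (B \<inter> Y k))"
      by (rule trace[symmetric])
    also have "\<dots> = real (dim (span (?vv ` Y k)))"
      using B(4) \<open>k \<le> p\<close> by simp
    also have "\<dots> = real (dim (span (\<Union>l\<in>set (take k \<sigma>). V l)))"
      unfolding Y_def by (simp only: span_Union_V[OF hV])
    finally show "(\<Sum>l\<in>set (take k \<sigma>). real (card (j l))) =
                    real (dim (span (\<Union>l\<in>set (take k \<sigma>). V l)))" .
  qed
  ultimately show ?thesis
    using jsub B(2,3) by blast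
qed

lemma Jhat_sum_le_surplus:
  assumes "d \<in> Pset s V" "i \<in> U"
    and "real (dim (span (\<Union>l\<in>-U. V l))) \<le> (\<Sum>l\<in>-U. real (card (j l)))"
  shows "(\<Sum>l\<in>U. Jhat s j i $ l) \<le> (\<Sum>l\<in>U. d $ l)"
proof -
  have "s \<le> (\<Sum>l\<in>U. d $ l) + real (dim (span (\<Union>l\<in>-U. V l)))"
    using assms(1) by (simp add: Pset_def)
  then show ?thesis
    using assms(2,3) by (simp add: Jhat_sum)
qed

lemma Jhat_sum_le_empty:
  assumes "d \<in> Pset s V" "i \<notin> U" "\<forall>l\<in>U. j l = {}"
  shows "(\<Sum>l\<in>U. Jhat s j i $ l) \<le> (\<Sum>l\<in>U. d $ l)"
proof -
  have "0 \<le> (\<Sum>l\<in>U. d $ l)"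
    using assms(1) by (simp add: Pset_def sum_nonneg)
  then show ?thesis
    using assms(2,3) by (simp add: Jhat_sum)
qed

lemma Jhat_suffix_bound:
  fixes T :: "nat \<Rightarrow> 'n::finite set" and p k :: nat
  assumes d': "d' \<in> Pset s V"
    and T_mono: "\<And>k k'. k \<le> k' \<Longrightarrow> T k \<subseteq> T k'"
    and support: "\<forall>l. l \<notin> T p \<longrightarrow> j l = {}"
    and counts: "\<forall>k\<le>p. (\<Sum>l\<in>T k. real (card (j l))) = real (dim (span (\<Union>l\<in>T k. V l)))"
    and i: "i \<in> T p" "i \<notin> T (p - 1)"
  shows "(\<Sum>l\<in>-T k. Jhat s j i $ l) \<le> (\<Sum>l\<in>-T k. d' $ l)"
proof (cases "k < p")
  case True
  then have "T k \<subseteq> T (p - 1)"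
    by (intro T_mono) linarith
  then have "i \<notin> T k"
    using i(2) by blast
  then show ?thesis
    using Jhat_sum_le_surplus[OF d', of i "-T k" j] counts True by simp
next
  case False
  then have "T p \<subseteq> T k"
    by (intro T_mono) simp
  then have "i \<in> T k" "\<forall>l\<in>-T k. j l = {}"
    using i(1) support by auto
  then show ?thesis
    using Jhat_sum_le_empty[OF d', of i "-T k" j] by simp
qed

lemma greedy_vertex:
  fixes V :: "'n::finite \<Rightarrow> 'a::euclidean_space set"
  assumes s0: "0 \<le> s" and hV: "\<forall>i. V i = span (v i ` {..<m i})" and dP: "d \<in> Pset s V"
    and \<sigma>: "distinct \<sigma>" "set \<sigma> = UNIV"
  shows "\<exists>(j, i)\<in>JJbar s m v. \<forall>k. \<forall>d'\<in>Pset s V.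
           (\<Sum>l\<in>-set (take k \<sigma>). Jhat s j i $ l) \<le> (\<Sum>l\<in>-set (take k \<sigma>). d' $ l)"
proof -
  define T where "T k = set (take k \<sigma>)" for k
  define f where "f k = real (dim (span (\<Union>l\<in>T k. V l)))" for k
  let ?c = "\<lambda>j l. real (card (j l))"
  have "f 0 \<le> s"
    using s0 by (simp add: f_def T_def)
  moreover have "s \<le> (\<Sum>l\<in>{}. d $ l) + real (dim (span (\<Union>l\<in>-{}. V l)))"
    using dP unfolding Pset_def by blast
  then have "s \<le> f (length \<sigma>)"
    using \<sigma>(2) by (simp add: f_def T_def)
  moreover have "0 < length \<sigma>"
    using \<sigma>(2) by (cases \<sigma>) auto
  ultimately obtain p where p: "0 < p" "p \<le> length \<sigma>" "f (p - 1) \<le> s" "s \<le> f p"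
    using nat_seq_crossing by blast
  obtain j where j: "\<forall>l. j l \<subseteq> {..<m l}" "inj_on (\<lambda>(i,k). v i k) (Sigma UNIV j)"
      "independent ((\<lambda>(i,k). v i k) ` Sigma UNIV j)" "\<forall>l. l \<notin> T p \<longrightarrow> j l = {}"
      "\<forall>k\<le>p. (\<Sum>l\<in>T k. ?c j l) = f k"
    using flag_tuple[OF hV, of p \<sigma>] unfolding T_def f_def by blast
  define i where "i = \<sigma> ! (p - 1)"
  have take_p: "take p \<sigma> = take (p - 1) \<sigma> @ [i]"
    using take_Suc_conv_app_nth[of "p - 1" \<sigma>] p(1,2) unfolding i_def by simp
  then have Tp: "T p = insert i (T (p - 1))" and i_new: "i \<notin> T (p - 1)"
    using distinct_take[OF \<sigma>(1), of p] unfolding T_def by auto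
  have T_mono: "T k \<subseteq> T k'" if "k \<le> k'" for k k'
    unfolding T_def using that by (simp add: set_take_subset_set_take)
  have total: "(\<Sum>l\<in>UNIV. ?c j l) = f p"
    using sum_UNIV_split_Compl[of "?c j" "T p"] j(4,5) by simp
  have "j \<in> JJ s m v"
    unfolding JJ_def using j(1-3) total p(4) by simp
  moreover have "0 \<le> Jhat s j i $ l" for l
  proof -
    have "f p = (\<Sum>l\<in>T p. ?c j l)" "f (p - 1) = (\<Sum>l\<in>T (p - 1). ?c j l)"
      using j(5) by simp_all
    moreover have "finite (T (p - 1))"
      by (simp add: T_def)
    ultimately have "f p = ?c j i + f (p - 1)"
      using Tp i_new by simp
    then show ?thesis
      using total p(3) by (simp add: Jhat_component)
  qed
  ultimately have ji: "(j, i) \<in> JJbar s m v"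
    by (simp add: JJbar_def)
  have i_in: "i \<in> T p"
    using Tp by simp
  have counts: "\<forall>k\<le>p. (\<Sum>l\<in>T k. ?c j l) = real (dim (span (\<Union>l\<in>T k. V l)))"
    using j(5) by (simp add: f_def)
  show ?thesis
  proof (rule bexI[OF _ ji], unfold prod.case, intro allI ballI)
    fix k d' assume d': "d' \<in> Pset s V"
    have "(\<Sum>l\<in>-T k. Jhat s j i $ l) \<le> (\<Sum>l\<in>-T k. d' $ l)"
      by (rule Jhat_suffix_bound[OF d' T_mono j(4) counts i_in i_new])
    then show "(\<Sum>l\<in>-set (take k \<sigma>). Jhat s j i $ l) \<le> (\<Sum>l\<in>-set (take k \<sigma>). d' $ l)"
      by (simp add: T_def)
  qed
qed

section \<open>Minimising nonnegative weights over P\<close>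

lemma abel_summation_bound:
  fixes w z :: "'b \<Rightarrow> real"
  assumes "\<forall>k. 0 \<le> sum_list (map z (drop k L))" "sorted (map w L)" "L \<noteq> []"
  shows "w (hd L) * sum_list (map z L) \<le> sum_list (map (\<lambda>l. w l * z l) L)"
  using assms
proof (induction L)
  case Nil
  then show ?case by simp
next
  case (Cons a L)
  show ?case
  proof (cases "L = []")
    case True
    then show ?thesis by simp
  next
    case False
    have suffix: "\<forall>k. 0 \<le> sum_list (map z (drop k L))"
      using Cons.prems(1) by (metis drop_Suc_Cons)
    have IH: "w (hd L) * sum_list (map z L) \<le> sum_list (map (\<lambda>l. w l * z l) L)"
      using Cons.IH[OF suffix] Cons.prems(2) False by simp
    have "w a \<le> w (hd L)"
      using Cons.prems(2) False by (cases L) auto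
    moreover have "0 \<le> sum_list (map z L)"
      using suffix by (metis drop0)
    ultimately have "w a * sum_list (map z L) \<le> w (hd L) * sum_list (map z L)"
      by (simp add: mult_right_mono)
    then show ?thesis
      using IH by (simp add: algebra_simps)
  qed
qed

lemma set_drop_eq_Compl_set_take:
  assumes "distinct xs" "set xs = UNIV"
  shows "set (drop k xs) = - set (take k xs)"
proof -
  have "set (take k xs) \<union> set (drop k xs) = UNIV"
    by (metis set_append append_take_drop_id assms(2))
  moreover have "set (take k xs) \<inter> set (drop k xs) = {}"
    using set_take_disj_set_drop_if_distinct[OF assms(1), of k k] by simp
  ultimately show ?thesis by auto
qed

text \<open>Every nonnegative linear functional attains its minimum over P at some Jhat(J,i): apply the
  greedy vertex to the indices sorted by increasing weight and sum by parts.\<close>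
lemma greedy_minimizer:
  fixes V :: "'n::finite \<Rightarrow> 'a::euclidean_space set"
  assumes s0: "0 \<le> s" and hV: "\<forall>i. V i = span (v i ` {..<m i})" and dP: "d \<in> Pset s V"
    and a: "\<forall>l. 0 \<le> a $ l"
  shows "\<exists>(j, i)\<in>JJbar s m v. \<forall>d'\<in>Pset s V. inner a (Jhat s j i) \<le> inner a d'"
proof -
  obtain xs where xs: "set xs = (UNIV::'n set)" "distinct xs"
    using finite_distinct_list[OF finite_class.finite_UNIV] by blast
  define \<sigma> where "\<sigma> = sort_key (\<lambda>l. a $ l) xs"
  have \<sigma>: "distinct \<sigma>" "set \<sigma> = UNIV" "sorted (map (\<lambda>l. a $ l) \<sigma>)" "\<sigma> \<noteq> []"
    using xs unfolding \<sigma>_def by (auto simp flip: set_empty)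
  obtain j i where ji: "(j, i) \<in> JJbar s m v" and suffix_min: "\<forall>k. \<forall>d'\<in>Pset s V.
      (\<Sum>l\<in>-set (take k \<sigma>). Jhat s j i $ l) \<le> (\<Sum>l\<in>-set (take k \<sigma>). d' $ l)"
    using greedy_vertex[OF s0 hV dP \<sigma>(1,2)] by blast
  have "inner a (Jhat s j i) \<le> inner a d'" if d': "d' \<in> Pset s V" for d'
  proof -
    define z where "z l = d' $ l - Jhat s j i $ l" for l
    have sum_list_eq: "sum_list (map g (drop k \<sigma>)) = (\<Sum>l\<in>-set (take k \<sigma>). g l)" for g :: "'n \<Rightarrow> real" and k
      using \<sigma>(1,2) by (simp add: sum_list_distinct_conv_sum_set set_drop_eq_Compl_set_take)
    have suffix: "0 \<le> sum_list (map z (drop k \<sigma>))" for k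
      using suffix_min d' by (simp add: sum_list_eq z_def sum_subtractf)
    have "a $ hd \<sigma> * sum_list (map z \<sigma>) \<le> sum_list (map (\<lambda>l. a $ l * z l) \<sigma>)"
      using abel_summation_bound[of z \<sigma>] suffix \<sigma>(3,4) by blast
    moreover have "0 \<le> a $ hd \<sigma> * sum_list (map z \<sigma>)"
      using suffix[of 0] a by simp
    moreover have "sum_list (map (\<lambda>l. a $ l * z l) \<sigma>) = inner a d' - inner a (Jhat s j i)"
      using sum_list_eq[of _ 0] by (simp add: z_def inner_vec_def right_diff_distrib sum_subtractf)
    ultimately show ?thesis
      by linarith
  qed
  then show ?thesis
    using ji by blast
qed

section \<open>Separation\<close>

lemma convex_orthant: "convex {y::real^'n::finite. \<forall>i. 0 \<le> y $ i}"
  by (rule convexI) (simp add: add_nonneg_nonneg)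

lemma nonneg_normal_component:
  fixes a g :: "real^'n::finite"
  assumes ray: "\<forall>t\<ge>0. b < inner a (g + t *\<^sub>R axis l 1)"
  shows "0 \<le> a $ l"
proof (rule ccontr)
  assume neg: "\<not> 0 \<le> a $ l"
  define t where "t = (inner a g - b) / (- a $ l)"
  have "b < inner a g"
    using ray[rule_format, of 0] by simp
  then have "0 \<le> t"
    unfolding t_def using neg by (intro divide_nonneg_pos) auto
  then have "b < inner a (g + t *\<^sub>R axis l 1)"
    using ray by blast
  also have "\<dots> = inner a g + t * a $ l"
    by (simp add: inner_add_right inner_axis)
  also have "\<dots> = b"
    unfolding t_def using neg by (simp add: field_simps)
  finally show False
    by simp
qed

text \<open>If every nonnegative linear functional attains its minimum over P at a point of the finite
  set G, then P \<subseteq> conv G + orthant: otherwise a hyperplane separates a point of P from the closed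
  convex set conv G + orthant, and its normal is nonnegative because that set is an up-set.\<close>
lemma subset_convex_hull_plus_coord_cone:
  fixes G P :: "(real^'n::finite) set"
  assumes G: "finite G"
    and min: "\<And>a. \<forall>l. 0 \<le> a $ l \<Longrightarrow> \<exists>g\<in>G. \<forall>x\<in>P. inner a g \<le> inner a x"
  shows "P \<subseteq> {x + y | x y. x \<in> convex hull G \<and> y \<in> coord_cone}"
proof
  let ?Q = "{x + y | x y. x \<in> convex hull G \<and> y \<in> coord_cone}"
  fix d assume dP: "d \<in> P"
  show "d \<in> ?Q"
  proof (rule ccontr)
    assume "d \<notin> ?Q"
    have Q: "?Q = (\<Union>x\<in>convex hull G. \<Union>y\<in>{y. \<forall>i. 0 \<le> y $ i}. {x + y})"
      using coord_cone_eq_orthant by auto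
    have "convex ?Q"
      unfolding Q by (rule convex_sums[OF convex_convex_hull convex_orthant])
    moreover have "closed ?Q"
      unfolding Q
      by (rule compact_closed_sums[OF finite_imp_compact_convex_hull[OF G] closed_positive_orthant])
    ultimately obtain a b where ab: "inner a d < b" "\<forall>x\<in>?Q. b < inner a x"
      using separating_hyperplane_closed_point[OF _ _ \<open>d \<notin> ?Q\<close>] by blast
    have up: "g + t *\<^sub>R axis l 1 \<in> ?Q" if "g \<in> G" "0 \<le> t" for g t l
    proof -
      have "g \<in> convex hull G"
        using that(1) by (rule hull_inc)
      moreover have "t *\<^sub>R axis l 1 \<in> coord_cone"
        using that(2) by (simp add: coord_cone_eq_orthant axis_component)
      ultimately show ?thesis
        by blast
    qed
    have above: "b < inner a g" if "g \<in> G" for g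
      using ab(2) up[OF that, of 0] by simp
    obtain g0 where "g0 \<in> G"
      using min[of 0] by auto
    have nonneg: "\<forall>l. 0 \<le> a $ l"
    proof
      fix l
      have "b < inner a (g0 + t *\<^sub>R axis l 1)" if "0 \<le> t" for t
        using ab(2) up[OF \<open>g0 \<in> G\<close> that] by blast
      then show "0 \<le> a $ l"
        by (intro nonneg_normal_component[of b a g0 l] allI impI)
    qed
    obtain g where "g \<in> G" "\<forall>x\<in>P. inner a g \<le> inner a x"
      using min[OF nonneg] by blast
    then have "b < inner a d"
      using above dP by (meson less_le_trans)
    then show False
      using ab(1) by simp
  qed
qed

theorem mainTheorem5:
  fixes s :: real and d :: "real^'n::finite"
    and V :: "'n \<Rightarrow> 'a::euclidean_space set"
    and m :: "'n \<Rightarrow> nat" and v :: "'n \<Rightarrow> nat \<Rightarrow> 'a"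
  assumes "0 \<le> s"
    and "\<forall>i. V i = span (v i ` {..<m i})"
    and "d \<in> Pset s V"
  shows "(\<forall>(j, i) \<in> JJbar s m v. Jhat s j i \<in> Pset s V) \<and>
         Pset s V = {x + y | x y. x \<in> convex hull ((\<lambda>(j, i). Jhat s j i) ` JJbar s m v)
                                 \<and> y \<in> coord_cone}"
proof -
  let ?G = "(\<lambda>(j, i). Jhat s j i) ` JJbar s m v"
  have in_P: "\<forall>(j, i) \<in> JJbar s m v. Jhat s j i \<in> Pset s V"
    using Jhat_in_Pset[OF assms(2)] by blast
  then have "convex hull ?G \<subseteq> Pset s V"
    by (intro hull_minimal Pset_convex) auto
  then have "{x + y | x y. x \<in> convex hull ?G \<and> y \<in> coord_cone} \<subseteq> Pset s V"
    using Pset_plus_coord_cone by blast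
  moreover have "Pset s V \<subseteq> {x + y | x y. x \<in> convex hull ?G \<and> y \<in> coord_cone}"
  proof (rule subset_convex_hull_plus_coord_cone)
    show "finite ?G"
      using finite_JJbar by blast
    show "\<exists>g\<in>?G. \<forall>x\<in>Pset s V. inner a g \<le> inner a x" if "\<forall>l. 0 \<le> a $ l" for a
      using greedy_minimizer[OF assms that] by fast
  qed
  ultimately show ?thesis
    using in_P by blast
qed

end
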